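(* Let $k\in\{0,\dots,n\}$. A run $R$ of an $n$-DPDA is $k$-upper if and only if at least one of the following holds: (1) $|R|=0$; (2) $|R|=1$ and the only step of $R$ is a read, or performs $\mathsf{push}^r_\gamma$ for some $r$, or performs $\mathsf{pop}^r$ for some $r\le k$; (3) the first step of $R$ performs $\mathsf{push}^r_\gamma$ for some $r\ge k+1$ and $R[1,|R|]$ is an $r$-return; (4) $R$ is a composition $R_1\circ R_2$ of two nonempty $k$-upper runs.
   Context: Stacks: fix order $n\ge1$, finite stack alphabet $\Gamma$. A $0$-stack is $(\gamma,x)$ with $\gamma\in\Gamma$, $x=(x_n,\dots,x_1)$ a vector of $n$ positive integers (position). For $k\in\{1,\dots,n\}$ a $k$-stack is a finite list $[s_1,\dots,s_m]$ ($m\ge0$) of nonempty $(k-1)$-stacks such that for some $x_n,\dots,x_{k+1}$, every position in $s_i$ has the form $(x_n,\dots,x_{k+1},i,y_{k-1},\dots,y_1)$. The top is at the right; $s^k:s^{k-1}$ appends at the top (right-associative); for $s^r=t^r:t^{r-1}:\dots:t^k$, $\mathrm{top}^k(s^r)=t^k$. Equality of stacks includes positions. For $k<n$, $\mathsf p_{+1}(s^k)$ adds $1$ to the $(n-k)$-th coordinate of all positions. Operations of order $k\ge1$: $\mathsf{pop}^k(s^r:\dots:s^k:s^{k-1})=s^r:\dots:s^k$, defined only if the topmost $k$-stack has at least two $(k-1)$-stacks; $\mathsf{push}^k_\gamma(s^r:\dots:s^0)=s^r:\dots:s^{k+1}:(s^k:\dots:s^0):\mathsf p_{+1}(s^{k-1}:\dots:s^1:(\gamma,x))$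 where $s^0=(\gamma',x)$. An $n$-DPDA has transitions determined by state and topmost stack symbol, each either $\mathrm{read}(\vec q)$ ($\vec q:A\to Q$ injective; leads to $(\vec q(a),s)$, reading $a$) or $(q,op)$ with $op$ a stack operation of order $\le n$ (leads to $(q,op(s))$ if defined). Configurations are (state, nonempty $n$-stack). A run is a finite sequence $R=c_0,\dots,c_m$ with each $c_i$ a successor of $c_{i-1}$; $R(i)=c_i$, $|R|=m$, $R[i,j]=c_i,\dots,c_j$; $\circ$ is concatenation. $\mathrm{top}^k(c)$, $\mathsf{pop}^k(c)$ refer to the stack of $c$. History: for a run $R$ and a $0$-stack $s^0$ of $R(|R|)$, $\mathrm{hist}(R,s^0)$ is a $0$-stack of $R(0)$: if $|R|=0$ it is $s^0$; if $R=S\circ T$, $|T|=1$, and the last step is a read or a $\mathsf{pop}$, or a $\mathsf{push}^r_\gamma$ with $s^0$ not in the topmost $(r-1)$-stack of $R(|R|)$, it is $\mathrm{hist}(S,s^0)$; if the last step is $\mathsf{push}^r_\gamma$ and $s^0$ is in the topmost $(r-1)$-stack of $R(|R|)$, it is $\mathrm{hist}(S,t^0)$ with $t^0$ equal to $s^0$ with the $(n-r+1)$-th position coordinate decreased by $1$. For a $k$-stack $s^k$ of $R(|R|)$, $k\ge1$, $\mathrm{hist}(R,s^k)$ is the $k$-stack of $R(0)$ containing $\mathrm{hist}(R,s^0)$ for all $0$-stacks $s^0$ of $s^k$. For $k\in\{0,\dots,n\}$, $R$ is $k$-upper if $\mathrm{hist}(R,\mathrm{top}^k(R(|R|)))=\mathrm{top}^k(R(0))$.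 For $k\in\{1,\dots,n\}$, $R$ is a $k$-return if $\mathrm{hist}(R,\mathrm{top}^{k-1}(R(|R|)))=\mathrm{top}^{k-1}(\mathsf{pop}^k(R(0)))$ and $R[i,|R|]$ is not $(k-1)$-upper for every $i\in\{0,\dots,|R|-1\}$. *)

theory Defs
  imports Main
begin

(* Higher-order stacks without explicit positions: positions of 0-stacks are
   fully determined by the tree structure (the i-th (k-1)-stack of a k-stack has
   k-th coordinate i), so a 0-stack (gamma, x) of an n-stack s is recovered as
   an element of zeros s, with x = [x_n, ..., x_1] (list head = x_n). *)

datatype 'g stack = Sym 'g | Stk "'g stack list"

lemma size_nth_less_stk [termination_simp]:
  "i < length xs \<Longrightarrow> size (xs ! i) < Suc (size_list size xs)"
  by (meson le_imp_less_Suc nth_mem size_list_estimation' order_refl)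

lemma size_last_less_stk [termination_simp]:
  "xs \<noteq> [] \<Longrightarrow> size (last xs) < Suc (size_list size xs)"
  by (meson last_in_set le_imp_less_Suc size_list_estimation' order_refl)

fun nonempty_stack :: "nat \<Rightarrow> 'g stack \<Rightarrow> bool" where
  "nonempty_stack 0 (Sym g) = True"
| "nonempty_stack (Suc k) (Stk xs) = (xs \<noteq> [])"
| "nonempty_stack _ _ = False"

fun is_stack :: "nat \<Rightarrow> 'g stack \<Rightarrow> bool" where
  "is_stack 0 (Sym g) = True"
| "is_stack (Suc k) (Stk xs) = (\<forall>t\<in>set xs. is_stack k t \<and> nonempty_stack k t)"
| "is_stack _ _ = False"

(* the 0-stacks of a stack, with their positions (1-based indices, outermost first) *)
lemma UN_cong_zeros [fundef_cong]:
  "A = B \<Longrightarrow> (\<And>x. x \<in> B \<Longrightarrow> f x = g x) \<Longrightarrow> (\<Union>x\<in>A. f x) = (\<Union>x\<in>B. g x)"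
  by auto

function zeros :: "'g stack \<Rightarrow> ('g \<times> nat list) set" where
  "zeros (Sym g) = {(g, [])}"
| "zeros (Stk xs) = (\<Union>i\<in>{..<length xs}. (\<lambda>(g, p). (g, Suc i # p)) ` zeros (xs ! i))"
  by pat_completeness auto
termination
  by (relation "measure size") (auto simp: size_nth_less_stk)

fun toppos :: "'g stack \<Rightarrow> nat list" where
  "toppos (Sym g) = []"
| "toppos (Stk xs) = (if xs = [] then [] else length xs # toppos (last xs))"

fun topsym :: "'g stack \<Rightarrow> 'g" where
  "topsym (Sym g) = g"
| "topsym (Stk xs) = (if xs = [] then undefined else topsym (last xs))"

fun settop :: "'g \<Rightarrow> 'g stack \<Rightarrow> 'g stack" where
  "settop g (Sym _) = Sym g"
| "settop g (Stk xs) = (if xs = [] then Stk [] else Stk (butlast xs @ [settop g (last xs)]))"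

(* pop / push acting on the topmost stack at depth d (depth 0 = the whole stack) *)
fun pop_at :: "nat \<Rightarrow> 'g stack \<Rightarrow> 'g stack option" where
  "pop_at 0 (Stk xs) = (if 2 \<le> length xs then Some (Stk (butlast xs)) else None)"
| "pop_at (Suc d) (Stk xs) =
     (if xs = [] then None else map_option (\<lambda>t. Stk (butlast xs @ [t])) (pop_at d (last xs)))"
| "pop_at _ (Sym _) = None"

fun push_at :: "nat \<Rightarrow> 'g \<Rightarrow> 'g stack \<Rightarrow> 'g stack option" where
  "push_at 0 g (Stk xs) = (if xs = [] then None else Some (Stk (xs @ [settop g (last xs)])))"
| "push_at (Suc d) g (Stk xs) =
     (if xs = [] then None else map_option (\<lambda>t. Stk (butlast xs @ [t])) (push_at d g (last xs)))"
| "push_at _ _ (Sym _) = None"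

datatype 'g sop = Pop nat | Push nat 'g

(* operation of order k on an n-stack: acts on the topmost k-stack, at depth n - k *)
fun apply_op :: "nat \<Rightarrow> 'g sop \<Rightarrow> 'g stack \<Rightarrow> 'g stack option" where
  "apply_op n (Pop k) s = pop_at (n - k) s"
| "apply_op n (Push k g) s = push_at (n - k) g s"

fun op_order :: "'g sop \<Rightarrow> nat" where
  "op_order (Pop k) = k"
| "op_order (Push k g) = k"

datatype ('q, 'g, 'a) trans = Read "'a \<Rightarrow> 'q" | Op 'q "'g sop"

type_synonym ('q, 'g, 'a) dpda = "'q \<Rightarrow> 'g \<Rightarrow> ('q, 'g, 'a) trans"

definition is_dpda :: "nat \<Rightarrow> ('q, 'g, 'a) dpda \<Rightarrow> bool" where
  "is_dpda n D \<longleftrightarrow>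
     (\<forall>q g f. D q g = Read f \<longrightarrow> inj f) \<and>
     (\<forall>q g p op. D q g = Op p op \<longrightarrow> 1 \<le> op_order op \<and> op_order op \<le> n)"

type_synonym ('q, 'g) config = "'q \<times> 'g stack"

definition is_config :: "nat \<Rightarrow> ('q, 'g) config \<Rightarrow> bool" where
  "is_config n c \<longleftrightarrow> is_stack n (snd c) \<and> nonempty_stack n (snd c)"

definition step_of :: "('q, 'g, 'a) dpda \<Rightarrow> ('q, 'g) config \<Rightarrow> ('q, 'g, 'a) trans" where
  "step_of D c = D (fst c) (topsym (snd c))"

definition successor :: "nat \<Rightarrow> ('q, 'g, 'a) dpda \<Rightarrow> ('q, 'g) config \<Rightarrow> ('q, 'g) config \<Rightarrow> bool" where
  "successor n D c c' \<longleftrightarrow>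
     (case step_of D c of
        Read f \<Rightarrow> (\<exists>a. c' = (f a, snd c))
      | Op p op \<Rightarrow> fst c' = p \<and> apply_op n op (snd c) = Some (snd c'))"

(* a run R = c_0,...,c_m is the list [c_0,...,c_m]; |R| = length R - 1 *)
definition is_run :: "nat \<Rightarrow> ('q, 'g, 'a) dpda \<Rightarrow> ('q, 'g) config list \<Rightarrow> bool" where
  "is_run n D R \<longleftrightarrow> R \<noteq> [] \<and> (\<forall>c\<in>set R. is_config n c) \<and>
     (\<forall>i. i + 1 < length R \<longrightarrow> successor n D (R ! i) (R ! (i + 1)))"

abbreviation rlen :: "'c list \<Rightarrow> nat" where "rlen R \<equiv> length R - 1"

(* composition of runs R1 o R2 (last configuration of R1 = first of R2) *)
definition comp_run :: "'c list \<Rightarrow> 'c list \<Rightarrow> 'c list" where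
  "comp_run R1 R2 = R1 @ tl R2"

(* one backward step of the history of a position x, for a step c -> c' *)
definition hist_step :: "nat \<Rightarrow> ('q, 'g, 'a) dpda \<Rightarrow> ('q, 'g) config \<Rightarrow> ('q, 'g) config
     \<Rightarrow> nat list \<Rightarrow> nat list" where
  "hist_step n D c c' x =
     (case step_of D c of
        Op p (Push r g) \<Rightarrow>
          (if take (n - r + 1) x = take (n - r + 1) (toppos (snd c'))
           then x[n - r := x ! (n - r) - 1] else x)
      | _ \<Rightarrow> x)"

(* position of hist(R, s^0) for s^0 at position x in R(|R|) *)
definition hist :: "nat \<Rightarrow> ('q, 'g, 'a) dpda \<Rightarrow> ('q, 'g) config list \<Rightarrow> nat list \<Rightarrow> nat list" where
  "hist n D R x = foldr (\<lambda>(c, c') y. hist_step n D c c' y) (zip R (tl R)) x"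

definition top_zeros :: "nat \<Rightarrow> nat \<Rightarrow> ('q, 'g) config \<Rightarrow> nat list set" where
  "top_zeros n k c = {x. \<exists>g. (g, x) \<in> zeros (snd c) \<and> take (n - k) x = take (n - k) (toppos (snd c))}"

(* location (coordinates x_n..x_{k+1}) of the k-stack of R(0) containing hist(R,s^0)
   for all 0-stacks s^0 in the set of positions P (None if there is no such k-stack) *)
definition hist_kstack :: "nat \<Rightarrow> ('q, 'g, 'a) dpda \<Rightarrow> nat \<Rightarrow> ('q, 'g) config list
     \<Rightarrow> nat list set \<Rightarrow> nat list option" where
  "hist_kstack n D k R P =
     (if \<exists>L. \<forall>x\<in>P. take (n - k) (hist n D R x) = L
      then Some (THE L. \<forall>x\<in>P. take (n - k) (hist n D R x) = L) else None)"

definition is_upper :: "nat \<Rightarrow> ('q, 'g, 'a) dpda \<Rightarrow> nat \<Rightarrow> ('q, 'g) config list \<Rightarrow> bool" where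
  "is_upper n D k R \<longleftrightarrow>
     hist_kstack n D k R (top_zeros n k (last R)) = Some (take (n - k) (toppos (snd (hd R))))"

definition is_return :: "nat \<Rightarrow> ('q, 'g, 'a) dpda \<Rightarrow> nat \<Rightarrow> ('q, 'g) config list \<Rightarrow> bool" where
  "is_return n D k R \<longleftrightarrow>
     (\<exists>s'. pop_at (n - k) (snd (hd R)) = Some s' \<and>
        hist_kstack n D (k - 1) R (top_zeros n (k - 1) (last R))
          = Some (take (n - (k - 1)) (toppos s'))) \<and>
     (\<forall>i < rlen R. \<not> is_upper n D (k - 1) (drop i R))"

end

theory Submission
  imports Defs
begin

text \<open>
  Positions are addresses (lists of coordinates), and the history of a position is computed
  backwards step by step: only a push of order \<open>r\<close> moves a position, namely one in the pushed
  copy back into the original. Hence a run is \<open>k\<close>-upper iff the history of the address of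
  its final topmost \<open>k\<close>-stack is the address of its initial one, and \<open>k\<close>-upper runs compose.

  A \<open>k\<close>-upper run with an intermediate \<open>k\<close>-upper suffix splits into two \<open>k\<close>-upper runs.
  Otherwise the run after the first step has no \<open>k\<close>-upper suffix, so the first step is neither
  a read nor an operation of order at most \<open>k\<close> (after which the rest would be \<open>k\<close>-upper), nor a
  pop of order above \<open>k\<close> (which destroys the topmost \<open>k\<close>-stack): it is a push of order
  \<open>r > k\<close>. The remaining run is an \<open>r\<close>-return exactly in this situation, by the invariant
  \<open>top_within_hist\<close>: along a run none of whose suffixes is \<open>(r - 1)\<close>-upper, the history of the
  topmost \<open>k\<close>-stack is the topmost \<open>k\<close>-stack inside the history of the topmost
  \<open>(r - 1)\<close>-stack; \<open>no_upper_suffix_top_within\<close> is its converse.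
\<close>

section \<open>Substacks and the effect of pop and push\<close>

fun substack :: "'g stack \<Rightarrow> nat list \<Rightarrow> 'g stack option" where
  "substack s [] = Some s"
| "substack (Sym g) (i # y) = None"
| "substack (Stk xs) (i # y) = (if 0 < i \<and> i \<le> length xs then substack (xs ! (i - 1)) y else None)"

lemma substack_append_None: "substack s y = None \<Longrightarrow> substack s (y @ z) = None"
  by (induction s y rule: substack.induct) auto

lemma nth_last_index [simp]: "xs \<noteq> [] \<Longrightarrow> xs ! (length xs - Suc 0) = last xs"
  by (simp add: last_conv_nth)

lemma substack_take_toppos:
  "\<exists>u. substack s (take j (toppos s)) = Some u \<and> toppos s = take j (toppos s) @ toppos u"
proof (induction j arbitrary: s)
  case 0 then show ?case by simp
next
  case (Suc j)
  show ?case
  proof (cases s)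
    case (Sym g) then show ?thesis by simp
  next
    case (Stk xs)
    show ?thesis
    proof (cases "xs = []")
      case True then show ?thesis using Stk by simp
    next
      case False
      obtain u where "substack (last xs) (take j (toppos (last xs))) = Some u"
        "toppos (last xs) = take j (toppos (last xs)) @ toppos u" using Suc by blast
      then show ?thesis using Stk False by auto
    qed
  qed
qed

lemma substack_take_toppos_defined: "substack s (take j (toppos s)) \<noteq> None"
  using substack_take_toppos[of s j] by auto

lemma length_toppos: "is_stack n s \<Longrightarrow> nonempty_stack n s \<Longrightarrow> length (toppos s) = n"
proof (induction n arbitrary: s)
  case 0 then show ?case by (cases s) auto
next
  case (Suc n)
  then obtain xs where "s = Stk xs" "xs \<noteq> []" by (cases s) auto
  then show ?case using Suc by auto
qed

lemma substack_is_stack: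
  "is_stack n s \<Longrightarrow> nonempty_stack n s \<Longrightarrow> substack s y = Some u \<Longrightarrow>
   length y \<le> n \<and> is_stack (n - length y) u \<and> nonempty_stack (n - length y) u"
proof (induction y arbitrary: n s)
  case Nil then show ?case by simp
next
  case (Cons i y)
  then obtain xs where s: "s = Stk xs" by (cases s) auto
  with Cons obtain n' where n: "n = Suc n'" by (cases n) auto
  from Cons s have i: "0 < i" "i \<le> length xs" and u: "substack (xs ! (i - 1)) y = Some u"
    by (auto split: if_splits)
  have "xs ! (i - 1) \<in> set xs" using i by auto
  then have "is_stack n' (xs ! (i - 1)) \<and> nonempty_stack n' (xs ! (i - 1))"
    using Cons.prems s n by auto
  then show ?case using Cons.IH[of n' "xs ! (i - 1)"] u n by auto
qed

lemma top_in_zeros: "is_stack n s \<Longrightarrow> nonempty_stack n s \<Longrightarrow> (topsym s, toppos s) \<in> zeros s"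
proof (induction n arbitrary: s)
  case 0 then show ?case by (cases s) auto
next
  case (Suc n)
  then obtain xs where s: "s = Stk xs" "xs \<noteq> []" by (cases s) auto
  then have "is_stack n (last xs) \<and> nonempty_stack n (last xs)" using Suc by auto
  then have "(topsym (last xs), toppos (last xs)) \<in> zeros (xs ! (length xs - 1))"
    using Suc.IH s by simp
  then show ?case using s
    by (auto intro!: bexI[where x="length xs - 1"] image_eqI[where x="(topsym (last xs), toppos (last xs))"])
qed

lemma substack_pop_at:
  "pop_at d s = Some s' \<Longrightarrow> substack s' y \<noteq> None \<Longrightarrow> y \<noteq> take (length y) (toppos s) \<Longrightarrow>
   substack s' y = substack s y"
proof (induction d s arbitrary: s' y rule: pop_at.induct)
  case (1 xs)
  then show ?case by (cases y) (auto simp: nth_butlast split: if_splits)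
next
  case (2 d xs)
  then obtain t where xs: "xs \<noteq> []" and t: "pop_at d (last xs) = Some t"
    and s': "s' = Stk (butlast xs @ [t])" by (auto split: if_splits)
  show ?case
  proof (cases y)
    case Nil then show ?thesis using 2 by simp
  next
    case (Cons i y')
    show ?thesis
    proof (cases "i = length xs")
      case True
      have "substack t y' = substack (last xs) y'"
        using 2(1)[OF xs t] 2(3,4) Cons True s' xs by (auto simp: nth_append split: if_splits)
      then show ?thesis using Cons True s' xs by (simp add: nth_append)
    next
      case False
      then show ?thesis using Cons s' xs 2(3)
        by (auto simp: nth_append nth_butlast split: if_splits)
    qed
  qed
qed auto

lemma substack_pop_at_defined:
  "pop_at d s = Some s' \<Longrightarrow> substack s' y \<noteq> None \<Longrightarrow> substack s y \<noteq> None"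
proof (induction d s arbitrary: s' y rule: pop_at.induct)
  case (1 xs)
  then show ?case by (cases y) (auto simp: nth_butlast split: if_splits)
next
  case (2 d xs)
  then obtain t where xs: "xs \<noteq> []" and t: "pop_at d (last xs) = Some t"
    and s': "s' = Stk (butlast xs @ [t])" by (auto split: if_splits)
  show ?case
  proof (cases y)
    case Nil then show ?thesis by simp
  next
    case (Cons i y')
    show ?thesis
    proof (cases "i = length xs")
      case True
      have "substack (last xs) y' \<noteq> None"
        using 2(1)[OF xs t] 2(3) Cons True s' xs by (auto simp: nth_append split: if_splits)
      then show ?thesis using Cons True s' xs by simp
    next
      case False
      then show ?thesis using Cons s' xs 2(3)
        by (auto simp: nth_append nth_butlast split: if_splits)
    qed
  qed
qed auto

lemma take_toppos_pop_at: "pop_at d s = Some s' \<Longrightarrow> take d (toppos s') = take d (toppos s)"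
proof (induction d s arbitrary: s' rule: pop_at.induct)
  case (2 d xs)
  then obtain t where xs: "xs \<noteq> []" and t: "pop_at d (last xs) = Some t"
    and s': "s' = Stk (butlast xs @ [t])" by (auto split: if_splits)
  then show ?case using 2(1)[OF xs t] by simp
qed auto

lemma substack_pop_at_removed: "pop_at d s = Some s' \<Longrightarrow> substack s' (take (Suc d) (toppos s)) = None"
proof (induction d s arbitrary: s' rule: pop_at.induct)
  case (1 xs)
  then show ?case by (auto split: if_splits)
next
  case (2 d xs)
  then obtain t where xs: "xs \<noteq> []" and t: "pop_at d (last xs) = Some t"
    and s': "s' = Stk (butlast xs @ [t])" by (auto split: if_splits)
  then show ?case using 2(1)[OF xs t] by (simp add: nth_append)
qed auto

lemma substack_pop_at_top_prefix:
  assumes "pop_at d s = Some s'" and "d < m"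
  shows "substack s' (take m (toppos s)) = None"
proof -
  have "take m (toppos s) = take (Suc d) (toppos s) @ drop (Suc d) (take m (toppos s))"
    using \<open>d < m\<close> by (metis Suc_leI append_take_drop_id min.absorb1 take_take)
  then show ?thesis using substack_pop_at_removed[OF assms(1)] substack_append_None by metis
qed

lemma toppos_settop: "toppos (settop g u) = toppos u"
  by (induction g u rule: settop.induct) auto

lemma toppos_substack_settop:
  "map_option toppos (substack (settop g u) y) = map_option toppos (substack u y)"
proof (induction y arbitrary: u)
  case Nil then show ?case by (simp add: toppos_settop)
next
  case (Cons i y)
  show ?case
  proof (cases u)
    case (Sym x) then show ?thesis by simp
  next
    case (Stk xs)
    show ?thesis
    proof (cases "xs = [] \<or> i = 0 \<or> length xs < i")
      case True then show ?thesis using Stk by auto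
    next
      case False
      then have xs: "xs \<noteq> []" and i: "0 < i" "i \<le> length xs" by auto
      show ?thesis
      proof (cases "i = length xs")
        case True then show ?thesis using Stk xs Cons.IH by (simp add: nth_append)
      next
        case False
        then have "i - 1 < length xs - 1" using i by arith
        then show ?thesis using Stk xs i by (simp add: nth_append nth_butlast)
      qed
    qed
  qed
qed

lemma push_at_depth_less: "push_at d g s = Some s' \<Longrightarrow> d < length (toppos s)"
  by (induction d g s arbitrary: s' rule: push_at.induct) (auto split: if_splits)

lemma toppos_push_at: "push_at d g s = Some s' \<Longrightarrow> toppos s' = (toppos s)[d := toppos s ! d + 1]"
proof (induction d g s arbitrary: s' rule: push_at.induct)
  case (1 g xs)
  then show ?case by (auto simp: toppos_settop split: if_splits)
next
  case (2 d g xs)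
  then obtain t where xs: "xs \<noteq> []" and t: "push_at d g (last xs) = Some t"
    and s': "s' = Stk (butlast xs @ [t])" by (auto split: if_splits)
  then show ?case using 2(1)[OF xs t] by simp
qed auto

lemma take_toppos_push_at_neq:
  assumes pu: "push_at d g s = Some s'"
  shows "take (Suc d) (toppos s) \<noteq> take (Suc d) (toppos s')"
proof
  assume a: "take (Suc d) (toppos s) = take (Suc d) (toppos s')"
  have d: "d < length (toppos s)" using push_at_depth_less[OF pu] .
  have "take (Suc d) (toppos s) ! d = toppos s ! d" by simp
  moreover have "take (Suc d) (toppos s') ! d = toppos s ! d + 1" using toppos_push_at[OF pu] d by simp
  ultimately show False using a by simp
qed

lemma take_toppos_push_at_short:
  assumes pu: "push_at d g s = Some s'" and nc: "take (Suc d) y \<noteq> take (Suc d) (toppos s')"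
    and eq: "y = take (length y) (toppos s')"
  shows "y = take (length y) (toppos s)"
proof -
  have "length y \<le> d"
  proof (rule ccontr)
    assume "\<not> length y \<le> d"
    then have "take (Suc d) y = take (Suc d) (toppos s')"
      by (subst eq) (simp add: min_def)
    with nc show False by simp
  qed
  then show ?thesis using eq toppos_push_at[OF pu] by simp
qed

lemma substack_push_at:
  "push_at d g s = Some s' \<Longrightarrow> substack s' y \<noteq> None \<Longrightarrow>
   take (Suc d) y \<noteq> take (Suc d) (toppos s') \<Longrightarrow> y \<noteq> take (length y) (toppos s') \<Longrightarrow>
   substack s' y = substack s y"
proof (induction d g s arbitrary: s' y rule: push_at.induct)
  case (1 g xs)
  then show ?case by (cases y) (auto simp: nth_append split: if_splits)
next
  case (2 d g xs)
  then obtain t where xs: "xs \<noteq> []" and t: "push_at d g (last xs) = Some t"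
    and s': "s' = Stk (butlast xs @ [t])" by (auto split: if_splits)
  show ?case
  proof (cases y)
    case Nil then show ?thesis using 2 by simp
  next
    case (Cons i y')
    show ?thesis
    proof (cases "i = length xs")
      case True
      have "substack t y' = substack (last xs) y'"
        using 2(1)[OF xs t] 2(3,4,5) Cons True s' xs by (auto simp: nth_append split: if_splits)
      then show ?thesis using Cons True s' xs by (simp add: nth_append)
    next
      case False
      then show ?thesis using Cons s' xs 2(3)
        by (auto simp: nth_append nth_butlast split: if_splits)
    qed
  qed
qed auto

lemma toppos_substack_push_at:
  "push_at d g s = Some s' \<Longrightarrow> take (Suc d) y = take (Suc d) (toppos s') \<Longrightarrow>
   map_option toppos (substack s' y) = map_option toppos (substack s (y[d := y ! d - 1]))"
proof (induction d g s arbitrary: s' y rule: push_at.induct)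
  case (1 g xs)
  then have xs: "xs \<noteq> []" and s': "s' = Stk (xs @ [settop g (last xs)])" by (auto split: if_splits)
  then obtain y' where "y = Suc (length xs) # y'" using 1(2) by (cases y) auto
  then show ?case using xs s' by (simp add: nth_append toppos_substack_settop)
next
  case (2 d g xs)
  then obtain t where xs: "xs \<noteq> []" and t: "push_at d g (last xs) = Some t"
    and s': "s' = Stk (butlast xs @ [t])" by (auto split: if_splits)
  then obtain y' where y: "y = length xs # y'" and y': "take (Suc d) y' = take (Suc d) (toppos t)"
    using 2(3) by (cases y) auto
  show ?case using 2(1)[OF xs t y'] y xs s' by (simp add: nth_append)
qed auto

lemma pop_at_push_at: "push_at d g s = Some s' \<Longrightarrow> pop_at d s' = Some s"
proof (induction d g s arbitrary: s' rule: push_at.induct)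
  case (1 g xs)
  then show ?case by (auto simp: Suc_le_eq split: if_splits)
next
  case (2 d g xs)
  then obtain t where xs: "xs \<noteq> []" and t: "push_at d g (last xs) = Some t"
    and s': "s' = Stk (butlast xs @ [t])" by (auto split: if_splits)
  then show ?case using 2(1)[OF xs t] by simp
qed auto

lemma take_toppos_pop_at_low:
  assumes "pop_at (n - r) s = Some s'" and "r \<le> k"
  shows "take (n - k) (toppos s') = take (n - k) (toppos s)"
proof -
  have "take (n - k) (take (n - r) (toppos s')) = take (n - k) (take (n - r) (toppos s))"
    using take_toppos_pop_at[OF assms(1)] by simp
  moreover have "n - k \<le> n - r" using assms(2) by simp
  ultimately show ?thesis by (simp add: min_def)
qed

lemma push_at_hist_preimage:
  assumes pu: "push_at d g s = Some s'" and lA: "length A = m"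
    and hA: "(if take (Suc d) A = take (Suc d) (toppos s') then A[d := A ! d - 1] else A) =
             take m (toppos s)"
  shows "A = take m (toppos s') \<or> A = take m (toppos s)"
proof (cases "take (Suc d) A = take (Suc d) (toppos s')")
  case cond: True
  have d: "d < length (toppos s)" using push_at_depth_less[OF pu] .
  have "length (take (Suc d) (toppos s')) = Suc d" using d toppos_push_at[OF pu] by simp
  then have m: "Suc d \<le> m" using cond lA by (metis length_take min.absorb1 min.absorb2 nat_le_linear)
  have "A ! d = toppos s' ! d" using cond m lA by (metis lessI nth_take)
  also have "\<dots> = toppos s ! d + 1" using toppos_push_at[OF pu] d by simp
  finally have Ad: "A ! d = toppos s ! d + 1" .
  have "A = (A[d := A ! d - 1])[d := A ! d]" by simp
  also have "\<dots> = (take m (toppos s))[d := toppos s ! d + 1]" using hA cond Ad by simp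
  also have "\<dots> = take m (toppos s')" using toppos_push_at[OF pu] by (simp add: take_update_swap)
  finally show ?thesis by simp
next
  case False
  then show ?thesis using hA by simp
qed

section \<open>History\<close>

lemma take_if_list_update:
  "take m (if take (Suc j) x = T then x[j := x ! j - 1] else x) =
   (if take (Suc j) (take m x) = T then (take m x)[j := take m x ! j - 1] else take m x)"
proof (cases "Suc j \<le> m")
  case True
  then have "take (Suc j) (take m x) = take (Suc j) x" by (simp add: min_def)
  moreover have "take m (x[j := x ! j - 1]) = (take m x)[j := take m x ! j - 1]"
    using True by (cases "j < length x") (auto simp: take_update_swap list_update_beyond)
  ultimately show ?thesis by simp
next
  case False
  then show ?thesis by (auto simp: list_update_beyond)
qed

lemma hist_step_take: "take m (hist_step n D c c' x) = hist_step n D c c' (take m x)"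
  unfolding hist_step_def
  by (auto split: trans.splits sop.splits simp: take_if_list_update[where j="n - _", simplified])

lemma hist_step_length: "length (hist_step n D c c' x) = length x"
  unfolding hist_step_def by (auto split: trans.splits sop.splits)

lemma hist_step_Push:
  "step_of D c = Op p (Push r g) \<Longrightarrow> hist_step n D c c' y =
   (if take (Suc (n - r)) y = take (Suc (n - r)) (toppos (snd c')) then y[n - r := y ! (n - r) - 1] else y)"
  unfolding hist_step_def by simp

lemma hist_step_not_Push: "(\<And>p r g. step_of D c \<noteq> Op p (Push r g)) \<Longrightarrow> hist_step n D c c' y = y"
  unfolding hist_step_def by (auto split: trans.splits sop.splits)

lemma hist_singleton [simp]: "hist n D [c] x = x"
  by (simp add: hist_def)

lemma hist_Cons_Cons [simp]: "hist n D (c # c' # R) x = hist_step n D c c' (hist n D (c' # R) x)"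
  by (simp add: hist_def)

lemma hist_take: "take m (hist n D R x) = hist n D R (take m x)"
  by (induction R rule: induct_list012) (simp_all add: hist_def hist_step_take)

lemma hist_length: "length (hist n D R x) = length x"
  by (induction R rule: induct_list012) (simp_all add: hist_def hist_step_length)

lemma hist_comp_run:
  "R1 \<noteq> [] \<Longrightarrow> R2 \<noteq> [] \<Longrightarrow> last R1 = hd R2 \<Longrightarrow>
   hist n D (comp_run R1 R2) x = hist n D R1 (hist n D R2 x)"
proof (induction R1 rule: induct_list012)
  case 1 then show ?case by simp
next
  case (2 c)
  then have "comp_run [c] R2 = R2" by (cases R2) (auto simp: comp_run_def)
  then show ?case by simp
next
  case (3 c c' R)
  have "comp_run (c # c' # R) R2 = c # comp_run (c' # R) R2" by (simp add: comp_run_def)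
  moreover obtain R' where "comp_run (c' # R) R2 = c' # R'" by (simp add: comp_run_def)
  ultimately show ?case using 3 by simp
qed

lemma hist_kstack_top_zeros:
  assumes "is_config n c"
  shows "hist_kstack n D k R (top_zeros n k c) = Some (hist n D R (take (n - k) (toppos (snd c))))"
proof -
  have "top_zeros n k c \<noteq> {}"
    using assms top_in_zeros unfolding is_config_def top_zeros_def by blast
  moreover have "\<forall>x\<in>top_zeros n k c. take (n - k) x = take (n - k) (toppos (snd c))"
    by (simp add: top_zeros_def)
  ultimately show ?thesis unfolding hist_kstack_def by (auto simp: hist_take)
qed

lemma successor_cases:
  assumes "successor n D c c'"
  obtains (read) f where "step_of D c = Read f" "snd c' = snd c"
  | (pop) p r where "step_of D c = Op p (Pop r)" "pop_at (n - r) (snd c) = Some (snd c')"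
  | (push) p r g where "step_of D c = Op p (Push r g)" "push_at (n - r) g (snd c) = Some (snd c')"
  using assms unfolding successor_def
  by (cases "step_of D c"; cases "case step_of D c of Op p op \<Rightarrow> op") (auto split: sop.splits)

lemma is_dpda_op_order:
  "is_dpda n D \<Longrightarrow> step_of D c = Op p op \<Longrightarrow> 1 \<le> op_order op \<and> op_order op \<le> n"
  unfolding is_dpda_def step_of_def by blast

lemma is_run_Cons_Cons:
  "is_run n D (c # c' # R) \<longleftrightarrow> successor n D c c' \<and> is_config n c \<and> is_run n D (c' # R)"
  unfolding is_run_def by (auto simp: All_less_Suc2 less_Suc_eq_0_disj)

lemma is_run_drop: "is_run n D R \<Longrightarrow> j < length R \<Longrightarrow> is_run n D (drop j R)"
  unfolding is_run_def by (auto dest: in_set_dropD simp: add.commute add.left_commute)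

lemma is_run_take: "is_run n D R \<Longrightarrow> 0 < j \<Longrightarrow> is_run n D (take j R)"
  unfolding is_run_def by (auto dest: in_set_takeD)

lemma is_run_config: "is_run n D R \<Longrightarrow> c \<in> set R \<Longrightarrow> is_config n c"
  unfolding is_run_def by auto

lemma is_run_last_config: "is_run n D R \<Longrightarrow> is_config n (last R)"
  unfolding is_run_def by auto

lemma length_toppos_config: "is_config n c \<Longrightarrow> length (toppos (snd c)) = n"
  unfolding is_config_def using length_toppos by blast

lemma substack_hist_step:
  assumes su: "successor n D c c'" and v: "substack (snd c') y \<noteq> None"
  shows "substack (snd c) (hist_step n D c c' y) \<noteq> None"
  using su
proof (cases rule: successor_cases)
  case (read f) then show ?thesis using v by (simp add: hist_step_not_Push)
next
  case (pop p r) then show ?thesis using substack_pop_at_defined v by (simp add: hist_step_not_Push)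
next
  case (push p r g)
  show ?thesis
  proof (cases "take (Suc (n - r)) y = take (Suc (n - r)) (toppos (snd c'))")
    case True
    then show ?thesis using toppos_substack_push_at[OF push(2) True] v hist_step_Push[OF push(1)]
      by (metis (no_types, lifting) option.map_disc_iff)
  next
    case False
    show ?thesis
    proof (cases "y = take (length y) (toppos (snd c'))")
      case True
      then have "y = take (length y) (toppos (snd c))"
        using take_toppos_push_at_short[OF push(2) False] by simp
      then show ?thesis using substack_take_toppos_defined[of "snd c" "length y"] False
        hist_step_Push[OF push(1)] by metis
    next
      case F2: False
      then show ?thesis using substack_push_at[OF push(2) v False F2] v False hist_step_Push[OF push(1)]
        by auto
    qed
  qed
qed

lemma substack_hist:
  "is_run n D R \<Longrightarrow> substack (snd (last R)) y \<noteq> None \<Longrightarrow>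
   substack (snd (hd R)) (hist n D R y) \<noteq> None"
proof (induction R rule: induct_list012)
  case 1 then show ?case by (simp add: is_run_def)
next
  case (2 c) then show ?case by simp
next
  case (3 c c' R)
  then show ?case using substack_hist_step by (fastforce simp: is_run_Cons_Cons)
qed

lemma hist_step_Push_take_toppos:
  assumes "step_of D c = Op p (Push r g)" and "push_at (n - r) g (snd c) = Some (snd c')"
  shows "hist_step n D c c' (take m (toppos (snd c'))) = take m (toppos (snd c))"
proof -
  have "hist_step n D c c' (toppos (snd c')) = toppos (snd c)"
    using hist_step_Push[OF assms(1)] toppos_push_at[OF assms(2)] push_at_depth_less[OF assms(2)]
    by simp
  then show ?thesis by (metis hist_step_take)
qed

lemma upper_step_cases:
  assumes dp: "is_dpda n D" and su: "successor n D c c'"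
    and hA: "hist_step n D c c' A = take (n - k) (toppos (snd c))"
    and vA: "substack (snd c') A \<noteq> None" and lA: "length A = n - k"
  obtains (top) "A = take (n - k) (toppos (snd c'))"
      "(\<exists>f. step_of D c = Read f) \<or> (\<exists>p r g. step_of D c = Op p (Push r g))
       \<or> (\<exists>p r. r \<le> k \<and> step_of D c = Op p (Pop r))"
  | (below) p r g where "k < r" "step_of D c = Op p (Push r g)"
      "push_at (n - r) g (snd c) = Some (snd c')" "A = take (n - k) (toppos (snd c))"
  using su
proof (cases rule: successor_cases)
  case (read f)
  then show ?thesis using that(1) hA by (simp add: hist_step_not_Push)
next
  case (pop p r)
  have A: "A = take (n - k) (toppos (snd c))" using hA pop(1) by (simp add: hist_step_not_Push)
  show ?thesis
  proof (cases "r \<le> k")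
    case True
    then show ?thesis using that(1) A pop take_toppos_pop_at_low by metis
  next
    case False
    have "r \<le> n" using is_dpda_op_order[OF dp pop(1)] by simp
    then have "substack (snd c') A = None"
      using substack_pop_at_top_prefix[OF pop(2)] A False by simp
    with vA show ?thesis by simp
  qed
next
  case (push p r g)
  have "A = take (n - k) (toppos (snd c')) \<or> A = take (n - k) (toppos (snd c))"
    using push_at_hist_preimage[OF push(2) lA] hA hist_step_Push[OF push(1)] by simp
  then show ?thesis
  proof
    assume "A = take (n - k) (toppos (snd c'))"
    then show ?thesis using that(1) push(1) by blast
  next
    assume A: "A = take (n - k) (toppos (snd c))"
    show ?thesis
    proof (cases "k < r")
      case True then show ?thesis using that(2) push A by blast
    next
      case False
      then have "A = take (n - k) (toppos (snd c'))" using A toppos_push_at[OF push(2)] by simp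
      then show ?thesis using that(1) push(1) by blast
    qed
  qed
qed

section \<open>Upper runs and returns\<close>

text \<open>An address of length \<open>m = n - k\<close> locates a \<open>k\<close>-stack.\<close>

definition upper_at :: "nat \<Rightarrow> ('q, 'g, 'a) dpda \<Rightarrow> nat \<Rightarrow> ('q, 'g) config list \<Rightarrow> bool" where
  "upper_at n D m R \<longleftrightarrow>
     hist n D R (take m (toppos (snd (last R)))) = take m (toppos (snd (hd R)))"

definition no_upper_suffix :: "nat \<Rightarrow> ('q, 'g, 'a) dpda \<Rightarrow> nat \<Rightarrow> ('q, 'g) config list \<Rightarrow> bool" where
  "no_upper_suffix n D m R \<longleftrightarrow> (\<forall>i < rlen R. \<not> upper_at n D m (drop i R))"

lemma no_upper_suffix_singleton [simp]: "no_upper_suffix n D m [c]"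
  by (simp add: no_upper_suffix_def)

lemma no_upper_suffix_Cons_Cons:
  "no_upper_suffix n D m (c # c' # R) \<longleftrightarrow>
   \<not> upper_at n D m (c # c' # R) \<and> no_upper_suffix n D m (c' # R)"
  unfolding no_upper_suffix_def by (auto simp: less_Suc_eq_0_disj)

lemma is_upper_iff_upper_at: "is_run n D R \<Longrightarrow> is_upper n D k R \<longleftrightarrow> upper_at n D (n - k) R"
  unfolding is_upper_def upper_at_def
  by (simp add: hist_kstack_top_zeros is_run_last_config)

lemma is_return_iff:
  assumes ru: "is_run n D R" and r: "1 \<le> r" "r \<le> n"
  shows "is_return n D r R \<longleftrightarrow>
    (\<exists>s'. pop_at (n - r) (snd (hd R)) = Some s' \<and>
       hist n D R (take (Suc (n - r)) (toppos (snd (last R)))) = take (Suc (n - r)) (toppos s')) \<and>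
    no_upper_suffix n D (Suc (n - r)) R"
proof -
  have nr: "n - (r - Suc 0) = Suc (n - r)" "Suc n - r = Suc (n - r)" using r by simp_all
  have "is_upper n D (r - 1) (drop i R) \<longleftrightarrow> upper_at n D (Suc (n - r)) (drop i R)"
    if "i < rlen R" for i
    using is_upper_iff_upper_at[OF is_run_drop[OF ru]] that nr by simp
  moreover have "hist_kstack n D (r - 1) R (top_zeros n (r - 1) (last R)) =
      Some (hist n D R (take (Suc (n - r)) (toppos (snd (last R)))))"
    using hist_kstack_top_zeros[OF is_run_last_config[OF ru], of D "r - 1" R] nr by simp
  ultimately show ?thesis
    unfolding is_return_def no_upper_suffix_def by (auto simp: nr)
qed

lemma upper_at_comp_run:
  assumes "R1 \<noteq> []" "R2 \<noteq> []" "last R1 = hd R2" "upper_at n D m R1" "upper_at n D m R2"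
  shows "upper_at n D m (comp_run R1 R2)"
proof -
  have "last (comp_run R1 R2) = last R2" and "hd (comp_run R1 R2) = hd R1"
    using assms(1-3) by (cases R2; auto simp: comp_run_def)+
  then show ?thesis using assms by (simp add: upper_at_def hist_comp_run)
qed

lemma comp_run_take_drop: "j < length R \<Longrightarrow> comp_run (take (Suc j) R) (drop j R) = R"
  unfolding comp_run_def by (metis append_take_drop_id drop_Suc tl_drop)

lemma last_take_Suc: "j < length xs \<Longrightarrow> last (take (Suc j) xs) = xs ! j"
  by (subst last_conv_nth) (auto simp: min_def intro!: arg_cong[where f="nth xs"])

lemma upper_at_take:
  assumes up: "upper_at n D m R" and j: "j < length R" and upj: "upper_at n D m (drop j R)"
  shows "upper_at n D m (take (Suc j) R)"
proof -
  let ?R1 = "take (Suc j) R" and ?R2 = "drop j R"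
  have last1: "last ?R1 = hd ?R2" using j by (simp add: last_take_Suc hd_drop_conv_nth)
  have "hist n D ?R1 (take m (toppos (snd (last ?R1)))) =
        hist n D ?R1 (hist n D ?R2 (take m (toppos (snd (last R)))))"
    using upj j last1 by (simp add: upper_at_def)
  also have "\<dots> = hist n D R (take m (toppos (snd (last R))))"
  proof -
    have "?R1 \<noteq> []" "?R2 \<noteq> []" using j by auto
    from hist_comp_run[OF this last1, of n D "take m (toppos (snd (last R)))"] show ?thesis
      by (simp only: comp_run_take_drop[OF j])
  qed
  also have "\<dots> = take m (toppos (snd (hd ?R1)))"
    using up j by (cases R) (auto simp: upper_at_def)
  finally show ?thesis by (simp add: upper_at_def)
qed

section \<open>The topmost \<open>k\<close>-stack inside a substack\<close>

text \<open>The address of the topmost \<open>k\<close>-stack inside the substack of \<open>c\<close> at address \<open>y\<close>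
  (junk if \<open>y\<close> addresses nothing).\<close>

definition top_within :: "nat \<Rightarrow> nat \<Rightarrow> ('q, 'g) config \<Rightarrow> nat list \<Rightarrow> nat list" where
  "top_within n k c y = take (n - k) (y @ toppos (the (substack (snd c) y)))"

lemma top_within_take_toppos:
  "m \<le> n - k \<Longrightarrow> top_within n k c (take m (toppos (snd c))) = take (n - k) (toppos (snd c))"
  using substack_take_toppos[of "snd c" m] unfolding top_within_def by (metis option.sel)

lemma length_top_within:
  assumes "is_config n c" "substack (snd c) y \<noteq> None" "length y \<le> n"
  shows "length (top_within n k c y) = n - k"
proof -
  obtain u where u: "substack (snd c) y = Some u" using assms(2) by auto
  have "is_stack (n - length y) u \<and> nonempty_stack (n - length y) u"
    using substack_is_stack[OF _ _ u] assms(1) unfolding is_config_def by blast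
  then have "length (toppos u) = n - length y" using length_toppos by blast
  then show ?thesis using u assms(3) by (simp add: top_within_def)
qed

lemma top_within_push_at:
  assumes pu: "push_at d g (snd c) = Some (snd c')" and dk: "Suc d \<le> n - k"
    and v: "substack (snd c') (take (Suc d) (toppos (snd c))) \<noteq> None"
  shows "top_within n k c' (take (Suc d) (toppos (snd c))) = take (n - k) (toppos (snd c))"
proof -
  let ?L = "take (Suc d) (toppos (snd c))"
  have "length ?L = Suc d" using push_at_depth_less[OF pu] by simp
  then have "take (Suc d) ?L \<noteq> take (Suc d) (toppos (snd c'))"
    and "?L \<noteq> take (length ?L) (toppos (snd c'))"
    using take_toppos_push_at_neq[OF pu] by simp_all
  then have "substack (snd c') ?L = substack (snd c) ?L" using substack_push_at[OF pu v] by blast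
  then have "top_within n k c' ?L = top_within n k c ?L" by (simp add: top_within_def)
  then show ?thesis using top_within_take_toppos dk by simp
qed

lemma take_neq_of_prefix:
  assumes "take j y \<noteq> take j t" and "y \<noteq> take (length y) t" and "take (length y) z = y"
  shows "take j z \<noteq> take j t"
proof
  assume eq: "take j z = take j t"
  show False
  proof (cases "j \<le> length y")
    case True
    then have "take j z = take j y" using assms(3) by (metis min.absorb1 take_take)
    then show False using eq assms(1) by simp
  next
    case False
    then have "take (length y) z = take (length y) t" using eq by (metis nat_le_linear take_take min.absorb1)
    then show False using assms(2,3) by simp
  qed
qed

lemma hist_step_top_within_Push:
  assumes st: "step_of D c = Op p (Push r g)" and pu0: "push_at (n - r) g (snd c) = Some (snd c')"
    and v: "substack (snd c') y \<noteq> None" and len: "length y \<le> n - k"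
    and nt: "hist_step n D c c' y \<noteq> take (length y) (toppos (snd c))"
  shows "hist_step n D c c' (top_within n k c' y) = top_within n k c (hist_step n D c c' y)"
proof -
  define d where "d = n - r"
  have pu: "push_at d g (snd c) = Some (snd c')" using pu0 d_def by simp
  have h: "\<And>z. hist_step n D c c' z =
     (if take (Suc d) z = take (Suc d) (toppos (snd c')) then z[d := z ! d - 1] else z)"
    using hist_step_Push[OF st] d_def by simp
  have ltp: "d < length (toppos (snd c'))" using push_at_depth_less[OF pu] toppos_push_at[OF pu] by simp
  define w where "w = toppos (the (substack (snd c') y))"
  have tw': "top_within n k c' y = take (n - k) (y @ w)" by (simp add: top_within_def w_def)
  show ?thesis
  proof (cases "take (Suc d) y = take (Suc d) (toppos (snd c'))")
    case True
    have "length (take (Suc d) y) = Suc d" using True ltp by simp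
    then have dl: "d < length y" by simp
    have w: "toppos (the (substack (snd c) (y[d := y ! d - 1]))) = w"
      using toppos_substack_push_at[OF pu True] v unfolding w_def
      by (metis option.map_sel option.map_disc_iff option.sel)
    have c1: "take (Suc d) (top_within n k c' y) = take (Suc d) y"
      using dl len by (simp add: tw' min_def)
    have c2: "take (n - k) (y @ w) ! d = y ! d" using dl len by (simp add: nth_append)
    have "hist_step n D c c' (top_within n k c' y) = (take (n - k) (y @ w))[d := y ! d - 1]"
      using c1 True c2 by (simp add: h tw')
    also have "\<dots> = take (n - k) ((y @ w)[d := y ! d - 1])" by (simp add: take_update_swap)
    also have "\<dots> = take (n - k) (y[d := y ! d - 1] @ w)" using dl by (simp add: list_update_append1)
    also have "\<dots> = top_within n k c (hist_step n D c c' y)" using True w by (simp add: h top_within_def)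
    finally show ?thesis .
  next
    case False
    have hy: "hist_step n D c c' y = y" using False h by simp
    have ny: "y \<noteq> take (length y) (toppos (snd c'))"
      using take_toppos_push_at_short[OF pu False] nt hy by auto
    have eq: "substack (snd c') y = substack (snd c) y" using substack_push_at[OF pu v False ny] .
    have "take (length y) (top_within n k c' y) = y" using len by (simp add: tw')
    then have "take (Suc d) (top_within n k c' y) \<noteq> take (Suc d) (toppos (snd c'))"
      using take_neq_of_prefix[OF False ny] by blast
    then show ?thesis using hy eq by (simp add: h top_within_def)
  qed
qed

lemma hist_step_top_within:
  assumes su: "successor n D c c'" and v: "substack (snd c') y \<noteq> None"
    and len: "length y \<le> n - k"
    and nt: "hist_step n D c c' y \<noteq> take (length y) (toppos (snd c))"
  shows "hist_step n D c c' (top_within n k c' y) = top_within n k c (hist_step n D c c' y)"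
  using su
proof (cases rule: successor_cases)
  case (read f) then show ?thesis by (simp add: hist_step_not_Push top_within_def)
next
  case (pop p r)
  have h: "\<And>z. hist_step n D c c' z = z" using pop(1) by (simp add: hist_step_not_Push)
  have "substack (snd c') y = substack (snd c) y" using substack_pop_at[OF pop(2) v] nt h by simp
  then show ?thesis using h by (simp add: top_within_def)
next
  case (push p r g)
  then show ?thesis by (rule hist_step_top_within_Push[OF _ _ v len nt])
qed

lemma hist_step_inj:
  assumes su: "successor n D c c'" and e: "hist_step n D c c' x = hist_step n D c c' x'"
    and tm: "take m x = take m x'" and ll: "length x = length x'"
    and nt: "hist_step n D c c' (take m x) \<noteq> take m (toppos (snd c))"
  shows "x = x'"
  using su
proof (cases rule: successor_cases)
  case (read f) then show ?thesis using e by (simp add: hist_step_not_Push)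
next
  case (pop p r) then show ?thesis using e by (simp add: hist_step_not_Push)
next
  case (push p r g)
  define d where "d = n - r"
  have pu: "push_at d g (snd c) = Some (snd c')" using push d_def by simp
  have h: "\<And>z. hist_step n D c c' z =
     (if take (Suc d) z = take (Suc d) (toppos (snd c')) then z[d := z ! d - 1] else z)"
    using hist_step_Push[OF push(1)] d_def by simp
  have updated_inj: "x = x'" if "x[d := x ! d - 1] = x'[d := x' ! d - 1]"
    and "take (Suc d) x = take (Suc d) x'"
  proof -
    have "d < length x \<Longrightarrow> x ! d = x' ! d" using that(2) ll by (metis lessI nth_take)
    then show ?thesis using that(1) ll
      by (metis list_update_beyond list_update_id list_update_overwrite not_le_imp_less)
  qed
  show ?thesis
  proof (cases "m \<le> d")
    case md: True
    \<comment> \<open>neither \<open>x\<close> nor \<open>x'\<close> lies in the pushed copy, else the step would be upper for \<open>take m x\<close>\<close>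
    have below: "take (Suc d) z \<noteq> take (Suc d) (toppos (snd c'))" if "take m z = take m x" for z
    proof
      assume a: "take (Suc d) z = take (Suc d) (toppos (snd c'))"
      have "take m z = take m (toppos (snd c'))" using a md
        by (metis min.absorb1 le_SucI take_take)
      also have "\<dots> = take m (toppos (snd c))" using toppos_push_at[OF pu] md by simp
      finally have "take m x = take m (toppos (snd c))" using that by simp
      moreover have "hist_step n D c c' (take m x) = take m (hist_step n D c c' x)"
        by (simp add: hist_step_take)
      moreover have "take m (hist_step n D c c' x) = take m x" using md by (simp add: h)
      ultimately show False using nt by simp
    qed
    then show ?thesis using e tm h[of x] h[of x'] by simp
  next
    case False
    then have "take (Suc d) x = take (Suc d) x'" using tm
      by (metis min.absorb1 not_le Suc_leI take_take)
    then show ?thesis using e h[of x] h[of x'] updated_inj by (auto split: if_splits)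
  qed
qed

lemma top_within_hist:
  assumes "is_run n D R" and mk: "m \<le> n - k" and "no_upper_suffix n D m R"
  shows "top_within n k (hd R) (hist n D R (take m (toppos (snd (last R))))) =
         hist n D R (take (n - k) (toppos (snd (last R))))"
  using assms
proof (induction R rule: induct_list012)
  case 1 then show ?case by (simp add: is_run_def)
next
  case (2 c) then show ?case by (simp add: top_within_take_toppos)
next
  case (3 c c' R)
  let ?l = "last (c' # R)"
  let ?y = "hist n D (c' # R) (take m (toppos (snd ?l)))"
  have su: "successor n D c c'" and ru: "is_run n D (c' # R)"
    using "3.prems"(1) by (simp_all add: is_run_Cons_Cons)
  have nu: "\<not> upper_at n D m (c # c' # R)" and nus: "no_upper_suffix n D m (c' # R)"
    using "3.prems"(3) by (simp_all add: no_upper_suffix_Cons_Cons)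
  have v: "substack (snd c') ?y \<noteq> None" using substack_hist[OF ru substack_take_toppos_defined] by simp
  have "length (toppos (snd ?l)) = n" using length_toppos_config[OF is_run_last_config[OF ru]] .
  then have ly: "length ?y = m" using mk by (simp add: hist_length)
  have nt: "hist_step n D c c' ?y \<noteq> take (length ?y) (toppos (snd c))"
    using nu ly by (simp add: upper_at_def)
  have "top_within n k c (hist_step n D c c' ?y) = hist_step n D c c' (top_within n k c' ?y)"
    using hist_step_top_within[OF su v _ nt] ly mk by simp
  then show ?case using "3.IH"(2)[OF ru mk nus] by simp
qed

lemma top_within_of_hist_step:
  assumes su: "successor n D c c'" and cf: "is_config n c'" and v: "substack (snd c') y \<noteq> None"
    and ly: "length y = m" and mk: "m \<le> n - k" and la: "length a = n - k" and ta: "take m a = y"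
    and inv: "top_within n k c (hist_step n D c c' y) = hist_step n D c c' a"
    and nt: "hist_step n D c c' y \<noteq> take m (toppos (snd c))"
  shows "top_within n k c' y = a"
proof (rule hist_step_inj[OF su, where m=m])
  have ty: "take m (top_within n k c' y) = y" using ly mk by (simp add: top_within_def)
  show "hist_step n D c c' (top_within n k c' y) = hist_step n D c c' a"
    using hist_step_top_within[OF su v] nt ly mk inv by simp
  show "take m (top_within n k c' y) = take m a" using ty ta by simp
  show "length (top_within n k c' y) = length a"
    using length_top_within[OF cf v] ly mk la by simp
  show "hist_step n D c c' (take m (top_within n k c' y)) \<noteq> take m (toppos (snd c))"
    using ty nt by simp
qed

lemma no_upper_suffix_top_within:
  assumes "is_run n D R" and mk: "m \<le> n - k"
    and "top_within n k (hd R) (hist n D R (take m (toppos (snd (last R))))) =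
         hist n D R (take (n - k) (toppos (snd (last R))))"
    and "no_upper_suffix n D (n - k) R"
  shows "no_upper_suffix n D m R"
  using assms
proof (induction R rule: induct_list012)
  case 1 then show ?case by (simp add: is_run_def)
next
  case (2 c) then show ?case by simp
next
  case (3 c c' R)
  let ?l = "last (c' # R)"
  let ?y = "hist n D (c' # R) (take m (toppos (snd ?l)))"
  let ?a = "hist n D (c' # R) (take (n - k) (toppos (snd ?l)))"
  have su: "successor n D c c'" and ru: "is_run n D (c' # R)"
    using "3.prems"(1) by (simp_all add: is_run_Cons_Cons)
  have cf: "is_config n c'" using is_run_config[OF ru list.set_intros(1)] .
  have nu: "\<not> upper_at n D (n - k) (c # c' # R)" and nus: "no_upper_suffix n D (n - k) (c' # R)"
    using "3.prems"(4) by (simp_all add: no_upper_suffix_Cons_Cons)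
  have ln: "length (toppos (snd ?l)) = n" using length_toppos_config[OF is_run_last_config[OF ru]] .
  have inv: "top_within n k c (hist_step n D c c' ?y) = hist_step n D c c' ?a"
    using "3.prems"(3) by simp
  have nt: "hist_step n D c c' ?y \<noteq> take m (toppos (snd c))"
  proof
    assume "hist_step n D c c' ?y = take m (toppos (snd c))"
    then have "hist_step n D c c' ?a = take (n - k) (toppos (snd c))"
      using inv top_within_take_toppos mk by metis
    then show False using nu by (simp add: upper_at_def)
  qed
  have "top_within n k c' ?y = ?a"
  proof (rule top_within_of_hist_step[OF su cf _ _ mk _ _ inv nt])
    show "substack (snd c') ?y \<noteq> None" using substack_hist[OF ru substack_take_toppos_defined] by simp
    show "length ?y = m" "length ?a = n - k" using ln mk by (simp_all add: hist_length)
    show "take m ?a = ?y" using mk by (simp add: hist_take min_def)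
  qed
  then have "no_upper_suffix n D m (c' # R)" using "3.IH"(2)[OF ru mk _ nus] by simp
  moreover have "\<not> upper_at n D m (c # c' # R)" using nt by (simp add: upper_at_def)
  ultimately show ?case by (simp add: no_upper_suffix_Cons_Cons)
qed

section \<open>Decomposition of upper runs\<close>

lemma upper_at_one_step_iff:
  assumes dp: "is_dpda n D" and ru: "is_run n D [c, c']" and kn: "k \<le> n"
  shows "upper_at n D (n - k) [c, c'] \<longleftrightarrow>
    (\<exists>f. step_of D c = Read f) \<or> (\<exists>p r g. step_of D c = Op p (Push r g))
    \<or> (\<exists>p r. r \<le> k \<and> step_of D c = Op p (Pop r))"
proof -
  have su: "successor n D c c'" and cf': "is_config n c'" using ru by (simp_all add: is_run_Cons_Cons is_run_def)
  let ?A = "take (n - k) (toppos (snd c'))"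
  have up: "upper_at n D (n - k) [c, c'] \<longleftrightarrow> hist_step n D c c' ?A = take (n - k) (toppos (snd c))"
    by (simp add: upper_at_def)
  show ?thesis
  proof
    assume "upper_at n D (n - k) [c, c']"
    moreover have "substack (snd c') ?A \<noteq> None" by (rule substack_take_toppos_defined)
    moreover have "length ?A = n - k" using length_toppos_config[OF cf'] by simp
    ultimately show "(\<exists>f. step_of D c = Read f) \<or> (\<exists>p r g. step_of D c = Op p (Push r g))
      \<or> (\<exists>p r. r \<le> k \<and> step_of D c = Op p (Pop r))"
      using upper_step_cases[OF dp su] up by metis
  next
    assume "(\<exists>f. step_of D c = Read f) \<or> (\<exists>p r g. step_of D c = Op p (Push r g))
      \<or> (\<exists>p r. r \<le> k \<and> step_of D c = Op p (Pop r))"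
    then show "upper_at n D (n - k) [c, c']"
    proof (elim disjE exE conjE)
      fix f assume "step_of D c = Read f"
      then show ?thesis using su by (auto simp: successor_def hist_step_not_Push upper_at_def)
    next
      fix p r g assume st: "step_of D c = Op p (Push r g)"
      then have "push_at (n - r) g (snd c) = Some (snd c')" using su by (simp add: successor_def)
      then show ?thesis using hist_step_Push_take_toppos[OF st] by (simp add: upper_at_def)
    next
      fix p r assume "r \<le> k" and st: "step_of D c = Op p (Pop r)"
      moreover have "pop_at (n - r) (snd c) = Some (snd c')" using su st by (simp add: successor_def)
      ultimately show ?thesis by (simp add: upper_at_def hist_step_not_Push take_toppos_pop_at_low)
    qed
  qed
qed

lemma hist_top_after_push_of_return:
  assumes pu: "push_at d g (snd c) = Some (snd (hd R))" and ru: "is_run n D R"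
    and dk: "Suc d \<le> n - k" and nus: "no_upper_suffix n D (Suc d) R"
    and ret: "hist n D R (take (Suc d) (toppos (snd (last R)))) = take (Suc d) (toppos (snd c))"
  shows "hist n D R (take (n - k) (toppos (snd (last R)))) = take (n - k) (toppos (snd c))"
proof -
  have "substack (snd (hd R)) (take (Suc d) (toppos (snd c))) \<noteq> None"
    using substack_hist[OF ru substack_take_toppos_defined] ret by metis
  then show ?thesis using top_within_hist[OF ru dk nus] top_within_push_at[OF pu dk] ret by simp
qed

lemma return_of_hist_top_after_push:
  assumes pu: "push_at d g (snd c) = Some (snd (hd R))" and ru: "is_run n D R"
    and dk: "Suc d \<le> n - k" and nus: "no_upper_suffix n D (n - k) R"
    and up: "hist n D R (take (n - k) (toppos (snd (last R)))) = take (n - k) (toppos (snd c))"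
  shows "hist n D R (take (Suc d) (toppos (snd (last R)))) = take (Suc d) (toppos (snd c))"
    and "no_upper_suffix n D (Suc d) R"
proof -
  show ret: "hist n D R (take (Suc d) (toppos (snd (last R)))) = take (Suc d) (toppos (snd c))"
    using arg_cong[OF up, of "take (Suc d)"] dk by (simp add: hist_take min_def)
  have "substack (snd (hd R)) (take (Suc d) (toppos (snd c))) \<noteq> None"
    using substack_hist[OF ru substack_take_toppos_defined] ret by metis
  then show "no_upper_suffix n D (Suc d) R"
    using no_upper_suffix_top_within[OF ru dk _ nus] top_within_push_at[OF pu dk] ret up by simp
qed

lemma upper_at_push_return:
  assumes dp: "is_dpda n D" and ru: "is_run n D R" and len: "0 < rlen R"
    and st: "step_of D (R ! 0) = Op p (Push r g)" and rk: "k < r"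
    and ret: "is_return n D r (drop 1 R)"
  shows "upper_at n D (n - k) R"
proof -
  obtain c0 c1 R'' where R: "R = c0 # c1 # R''" using len by (cases R rule: remdups_adj.cases) auto
  have su: "successor n D c0 c1" and ru': "is_run n D (c1 # R'')"
    using ru R by (simp_all add: is_run_Cons_Cons)
  have st0: "step_of D c0 = Op p (Push r g)" using st R by simp
  have rn: "1 \<le> r" "r \<le> n" using is_dpda_op_order[OF dp st0] by simp_all
  have pu: "push_at (n - r) g (snd c0) = Some (snd c1)" using su st0 by (simp add: successor_def)
  have pu': "push_at (n - r) g (snd c0) = Some (snd (hd (c1 # R'')))" using pu by simp
  have dk: "Suc (n - r) \<le> n - k" using rk rn by arith
  from ret[unfolded R, simplified, unfolded is_return_iff[OF ru' rn]]
  have hb: "hist n D (c1 # R'') (take (Suc (n - r)) (toppos (snd (last (c1 # R''))))) =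
      take (Suc (n - r)) (toppos (snd c0))"
    and nus: "no_upper_suffix n D (Suc (n - r)) (c1 # R'')"
    using pop_at_push_at[OF pu] by auto
  have A1: "hist n D (c1 # R'') (take (n - k) (toppos (snd (last (c1 # R''))))) =
      take (n - k) (toppos (snd c0))"
    using hist_top_after_push_of_return[OF pu' ru' dk nus hb] .
  \<comment> \<open>the topmost \<open>k\<close>-stack of \<open>c0\<close> is not inside the pushed copy, so its history is unchanged\<close>
  have "take (Suc (n - r)) (take (n - k) (toppos (snd c0))) \<noteq> take (Suc (n - r)) (toppos (snd c1))"
    using take_toppos_push_at_neq[OF pu] dk by (simp add: min_def)
  then show ?thesis using A1 hist_step_Push[OF st0] R by (simp add: upper_at_def)
qed

lemma upper_at_split_or_push_return:
  assumes dp: "is_dpda n D" and ru: "is_run n D R" and len: "1 < rlen R"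
    and up: "upper_at n D (n - k) R"
  shows "(\<exists>p r g. k < r \<and> step_of D (R ! 0) = Op p (Push r g) \<and> is_return n D r (drop 1 R))
    \<or> (\<exists>j. 0 < j \<and> j < rlen R \<and> upper_at n D (n - k) (drop j R))"
proof (rule disjCI)
  assume noj: "\<nexists>j. 0 < j \<and> j < rlen R \<and> upper_at n D (n - k) (drop j R)"
  have nus: "no_upper_suffix n D (n - k) (drop 1 R)"
    unfolding no_upper_suffix_def
  proof (intro allI impI)
    fix i assume "i < rlen (drop 1 R)"
    then have "0 < Suc i \<and> Suc i < rlen R" by simp
    then show "\<not> upper_at n D (n - k) (drop i (drop 1 R))" using noj by auto
  qed
  obtain c0 c1 R'' where R: "R = c0 # c1 # R''" and "R'' \<noteq> []"
    using len by (cases R rule: remdups_adj.cases) auto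
  then have nu1: "\<not> upper_at n D (n - k) (c1 # R'')" using nus
    by (cases R'') (simp_all add: no_upper_suffix_Cons_Cons)
  have su: "successor n D c0 c1" and ru': "is_run n D (c1 # R'')"
    using ru R by (simp_all add: is_run_Cons_Cons)
  let ?l = "last (c1 # R'')"
  define A1 where "A1 = hist n D (c1 # R'') (take (n - k) (toppos (snd ?l)))"
  have hA1: "hist_step n D c0 c1 A1 = take (n - k) (toppos (snd c0))"
    using up R by (simp add: upper_at_def A1_def)
  have vA1: "substack (snd c1) A1 \<noteq> None"
    unfolding A1_def using substack_hist[OF ru' substack_take_toppos_defined] by simp
  have lA1: "length A1 = n - k"
    using length_toppos_config[OF is_run_last_config[OF ru']] by (simp add: A1_def hist_length)
  have nA1: "A1 \<noteq> take (n - k) (toppos (snd c1))" using nu1 by (simp add: upper_at_def A1_def)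
  obtain p r g where rk: "k < r" and st0: "step_of D c0 = Op p (Push r g)"
    and pu: "push_at (n - r) g (snd c0) = Some (snd c1)" and A1: "A1 = take (n - k) (toppos (snd c0))"
    using upper_step_cases[OF dp su hA1 vA1 lA1] nA1 by metis
  have rn: "1 \<le> r" "r \<le> n" using is_dpda_op_order[OF dp st0] by simp_all
  have dk: "Suc (n - r) \<le> n - k" using rk rn by arith
  have pu': "push_at (n - r) g (snd c0) = Some (snd (hd (c1 # R'')))" using pu by simp
  have nus': "no_upper_suffix n D (n - k) (c1 # R'')" using nus R by simp
  have "is_return n D r (c1 # R'')"
    unfolding is_return_iff[OF ru' rn]
    using return_of_hist_top_after_push[OF pu' ru' dk nus'] A1 pop_at_push_at[OF pu]
    by (auto simp: A1_def)
  then show "\<exists>p r g. k < r \<and> step_of D (R ! 0) = Op p (Push r g) \<and> is_return n D r (drop 1 R)"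
    using R st0 rk by auto
qed

lemma upper_at_split:
  assumes ru: "is_run n D R" and up: "upper_at n D m R"
    and j: "0 < j" "j < rlen R" and upj: "upper_at n D m (drop j R)"
  shows "\<exists>R1 R2. is_run n D R1 \<and> is_run n D R2 \<and> 0 < rlen R1 \<and> 0 < rlen R2
    \<and> upper_at n D m R1 \<and> upper_at n D m R2 \<and> last R1 = hd R2 \<and> R = comp_run R1 R2"
proof (intro exI conjI)
  show "is_run n D (take (Suc j) R)" using is_run_take[OF ru] by simp
  show "is_run n D (drop j R)" using is_run_drop[OF ru] j by simp
  show "upper_at n D m (take (Suc j) R)" using upper_at_take[OF up _ upj] j by simp
  show "last (take (Suc j) R) = hd (drop j R)"
    using j by (simp add: last_take_Suc hd_drop_conv_nth)
  have "j < length R" using j by simp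
  then show "R = comp_run (take (Suc j) R) (drop j R)" by (simp add: comp_run_take_drop)
qed (use j upj in auto)

lemma upper_at_characterization:
  assumes dp: "is_dpda n D" and kn: "k \<le> n" and ru: "is_run n D R"
  shows "upper_at n D (n - k) R \<longleftrightarrow>
     (rlen R = 0
      \<or> (rlen R = 1 \<and>
           ((\<exists>f. step_of D (R ! 0) = Read f)
            \<or> (\<exists>p r g. step_of D (R ! 0) = Op p (Push r g))
            \<or> (\<exists>p r. r \<le> k \<and> step_of D (R ! 0) = Op p (Pop r))))
      \<or> (0 < rlen R \<and>
           (\<exists>p r g. k < r \<and> step_of D (R ! 0) = Op p (Push r g) \<and> is_return n D r (drop 1 R)))
      \<or> (\<exists>R1 R2. is_run n D R1 \<and> is_run n D R2 \<and> 0 < rlen R1 \<and> 0 < rlen R2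
                 \<and> upper_at n D (n - k) R1 \<and> upper_at n D (n - k) R2
                 \<and> last R1 = hd R2 \<and> R = comp_run R1 R2))"
    (is "_ \<longleftrightarrow> ?zero \<or> ?one \<or> ?push \<or> ?split")
proof
  assume up: "upper_at n D (n - k) R"
  obtain c R' where R: "R = c # R'" using ru by (cases R) (auto simp: is_run_def)
  consider "R' = []" | c' where "R' = [c']" | "1 < rlen R"
    using R by (cases R' rule: remdups_adj.cases) auto
  then show "?zero \<or> ?one \<or> ?push \<or> ?split"
  proof cases
    case 1 then show ?thesis using R by simp
  next
    case 2 then show ?thesis using upper_at_one_step_iff[OF dp _ kn] ru up R by simp
  next
    case 3
    then have "?push \<or> (\<exists>j. 0 < j \<and> j < rlen R \<and> upper_at n D (n - k) (drop j R))"
      using upper_at_split_or_push_return[OF dp ru 3 up] 3 by auto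
    then show ?thesis using upper_at_split[OF ru up] by blast
  qed
next
  assume "?zero \<or> ?one \<or> ?push \<or> ?split"
  then consider ?zero | ?one | ?push | ?split by argo
  then show "upper_at n D (n - k) R"
  proof cases
    case 1
    then obtain c where "R = [c]" using ru by (cases R) (auto simp: is_run_def)
    then show ?thesis by (simp add: upper_at_def)
  next
    case 2
    then obtain c c' where "R = [c, c']" by (cases R rule: remdups_adj.cases) auto
    then show ?thesis using upper_at_one_step_iff[OF dp _ kn] ru 2 by simp
  next
    case 3 then show ?thesis using upper_at_push_return[OF dp ru] by blast
  next
    case 4 then show ?thesis using upper_at_comp_run by (auto simp: is_run_def)
  qed
qed

theorem mainTheorem10:
  fixes D :: "('q::finite, 'g::finite, 'a::finite) dpda"
    and n k :: nat
    and R :: "('q, 'g) config list"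
  assumes "1 \<le> n" and "is_dpda n D" and "k \<le> n" and "is_run n D R"
  shows "is_upper n D k R \<longleftrightarrow>
     (rlen R = 0
      \<or> (rlen R = 1 \<and>
           ((\<exists>f. step_of D (R ! 0) = Read f)
            \<or> (\<exists>p r g. step_of D (R ! 0) = Op p (Push r g))
            \<or> (\<exists>p r. r \<le> k \<and> step_of D (R ! 0) = Op p (Pop r))))
      \<or> (0 < rlen R \<and>
           (\<exists>p r g. k + 1 \<le> r \<and> step_of D (R ! 0) = Op p (Push r g)
                   \<and> is_return n D r (drop 1 R)))
      \<or> (\<exists>R1 R2. is_run n D R1 \<and> is_run n D R2 \<and> 0 < rlen R1 \<and> 0 < rlen R2
                 \<and> is_upper n D k R1 \<and> is_upper n D k R2
                 \<and> last R1 = hd R2 \<and> R = comp_run R1 R2))"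
  using upper_at_characterization[OF assms(2-4)]
  by (simp add: is_upper_iff_upper_at assms(4) Suc_le_eq cong: conj_cong)

end
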